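(* Let $X\subseteq I$ be an itemset and let $W$ be any descendant of $X$ in the set-enumeration tree. Then $$u(W)\le SUM(X.pu)+SUM(X.rpu).$$
   Context: Let $I$ be a finite set of items. An uncertain database $D=\{T_1,\dots,T_n\}$ is a finite collection of transactions with each $T_c\subseteq I$. Each item $i\in T_c$ has a quantity $q(i,T_c)>0$ and an existence probability $p(i,T_c)\in(0,1]$. Each item $i\in I$ has an external utility $pr(i)\in\mathbb{R}$, which may be positive or negative. Utility quantities: - $u(i,T_c)=pr(i)\,q(i,T_c)$. - For $X\subseteq T_c$: $u(X,T_c)=\sum_{i\in X}u(i,T_c)$. - $u(X)=\sum_{T_c\in D,\ X\subseteq T_c}u(X,T_c)$. Fix a total processing order on $I$. The paper sorts items by ascending $RTWU$ and places all items with negative external utility after the others. The set-enumeration tree has root $\emptyset$, and the children of a node $X$ are the sets $X\cup\{i\}$ with $i$ after every item of $X$. Hence the descendants of $X$ are the itemsets $W\supsetneq X$ such that every item of $W\setminus X$ comes after every item of $X$. For $X\subseteq T_c$ define: - $pu(X,T_c)=\sum_{i\in X,\ pr(i)>0}u(i,T_c)$; - $rpu(X,T_c)=\sum u(i,T_c)$ over $i\in T_c$ with $pr(i)>0$ and $i$ after every item of $X$. Finally $SUM(X.pu)=\sum_{T_c\in D,\ X\subseteq T_c}pu(X,T_c)$ and $SUM(X.rpu)=\sum_{T_c\in D,\ X\subseteq T_c}rpu(X,T_c)$. *)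

theory Defs
  imports Complex_Main
begin

text \<open>An uncertain database is a list D of transactions (sets of items); the
transaction D ! c carries quantities q c i and probabilities p c i.
The processing order is a strict total order r on the item set I:
(a, b) \<in> r means "a comes before b".\<close>

definition uncertain_db ::
  "'a set \<Rightarrow> 'a set list \<Rightarrow> (nat \<Rightarrow> 'a \<Rightarrow> real) \<Rightarrow> (nat \<Rightarrow> 'a \<Rightarrow> real) \<Rightarrow> bool" where
  "uncertain_db I D q p \<longleftrightarrow> finite I \<and>
     (\<forall>c < length D. D ! c \<subseteq> I \<and>
        (\<forall>i \<in> D ! c. q c i > 0 \<and> 0 < p c i \<and> p c i \<le> 1))"

definition util_item :: "('a \<Rightarrow> real) \<Rightarrow> (nat \<Rightarrow> 'a \<Rightarrow> real) \<Rightarrow> 'a \<Rightarrow> nat \<Rightarrow> real" where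
  "util_item pr q i c = pr i * q c i"

definition util_in :: "('a \<Rightarrow> real) \<Rightarrow> (nat \<Rightarrow> 'a \<Rightarrow> real) \<Rightarrow> 'a set \<Rightarrow> nat \<Rightarrow> real" where
  "util_in pr q X c = (\<Sum>i\<in>X. util_item pr q i c)"

definition util :: "'a set list \<Rightarrow> ('a \<Rightarrow> real) \<Rightarrow> (nat \<Rightarrow> 'a \<Rightarrow> real) \<Rightarrow> 'a set \<Rightarrow> real" where
  "util D pr q X = (\<Sum>c \<in> {c. c < length D \<and> X \<subseteq> D ! c}. util_in pr q X c)"

definition pu :: "('a \<Rightarrow> real) \<Rightarrow> (nat \<Rightarrow> 'a \<Rightarrow> real) \<Rightarrow> 'a set \<Rightarrow> nat \<Rightarrow> real" where
  "pu pr q X c = (\<Sum>i \<in> {i \<in> X. pr i > 0}. util_item pr q i c)"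

definition rpu :: "'a set list \<Rightarrow> ('a \<times> 'a) set \<Rightarrow> ('a \<Rightarrow> real) \<Rightarrow> (nat \<Rightarrow> 'a \<Rightarrow> real)
    \<Rightarrow> 'a set \<Rightarrow> nat \<Rightarrow> real" where
  "rpu D r pr q X c =
     (\<Sum>i \<in> {i \<in> D ! c. pr i > 0 \<and> (\<forall>x\<in>X. (x, i) \<in> r)}. util_item pr q i c)"

definition SUM_pu :: "'a set list \<Rightarrow> ('a \<Rightarrow> real) \<Rightarrow> (nat \<Rightarrow> 'a \<Rightarrow> real) \<Rightarrow> 'a set \<Rightarrow> real" where
  "SUM_pu D pr q X = (\<Sum>c \<in> {c. c < length D \<and> X \<subseteq> D ! c}. pu pr q X c)"

definition SUM_rpu :: "'a set list \<Rightarrow> ('a \<times> 'a) set \<Rightarrow> ('a \<Rightarrow> real) \<Rightarrow> (nat \<Rightarrow> 'a \<Rightarrow> real)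
    \<Rightarrow> 'a set \<Rightarrow> real" where
  "SUM_rpu D r pr q X = (\<Sum>c \<in> {c. c < length D \<and> X \<subseteq> D ! c}. rpu D r pr q X c)"

definition descendant :: "'a set \<Rightarrow> ('a \<times> 'a) set \<Rightarrow> 'a set \<Rightarrow> 'a set \<Rightarrow> bool" where
  "descendant I r X W \<longleftrightarrow> W \<subseteq> I \<and> X \<subset> W \<and> (\<forall>w \<in> W - X. \<forall>x \<in> X. (x, w) \<in> r)"

end

theory Submission
  imports Defs
begin

text \<open>Since quantities are positive, an item's utility has the sign of its external utility.
Hence, in a transaction containing a descendant W of X, dropping the items of W with
non-positive external utility can only increase u(W); the positive items of X contribute
to pu(X), and the positive items of W - X come after every item of X, so they contribute
to rpu(X), whose remaining summands are non-negative. Summing over the transactions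
containing W, and then over the larger set of those containing X, gives the bound.\<close>

lemma sum_le_sum_filter:
  fixes f :: "'b \<Rightarrow> 'c::ordered_comm_monoid_add"
  assumes "finite A" and "\<And>i. i \<in> A \<Longrightarrow> \<not> P i \<Longrightarrow> f i \<le> 0"
  shows "sum f A \<le> sum f {i \<in> A. P i}"
proof -
  have "sum f A \<le> (\<Sum>i\<in>A. if P i then f i else 0)"
    using assms(2) by (intro sum_mono) auto
  also have "\<dots> = sum f {i \<in> A. P i}"
    using assms(1) by (simp add: sum.inter_filter)
  finally show ?thesis .
qed

lemma util_item_nonneg:
  "q c i > 0 \<Longrightarrow> pr i > 0 \<Longrightarrow> util_item pr q i c \<ge> 0"
  unfolding util_item_def by simp

lemma util_item_nonpos:
  "q c i > 0 \<Longrightarrow> \<not> pr i > 0 \<Longrightarrow> util_item pr q i c \<le> 0"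
  unfolding util_item_def by (simp add: mult_nonpos_nonneg)

lemma pu_nonneg:
  assumes "\<And>i. i \<in> X \<Longrightarrow> q c i > 0"
  shows "pu pr q X c \<ge> 0"
  unfolding pu_def using assms by (intro sum_nonneg util_item_nonneg) auto

lemma rpu_nonneg:
  assumes "\<And>i. i \<in> D ! c \<Longrightarrow> q c i > 0"
  shows "rpu D r pr q X c \<ge> 0"
  unfolding rpu_def using assms by (intro sum_nonneg util_item_nonneg) auto

lemma util_in_le_pu:
  assumes "finite X" and "\<And>i. i \<in> X \<Longrightarrow> q c i > 0"
  shows "util_in pr q X c \<le> pu pr q X c"
  unfolding util_in_def pu_def
  using assms by (intro sum_le_sum_filter util_item_nonpos) auto

lemma util_in_later_items_le_rpu:
  assumes "finite (D ! c)" and "\<And>i. i \<in> D ! c \<Longrightarrow> q c i > 0"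
    and "Y \<subseteq> D ! c" and "\<forall>y \<in> Y. \<forall>x \<in> X. (x, y) \<in> r"
  shows "util_in pr q Y c \<le> rpu D r pr q X c"
proof -
  have "finite Y" using assms(1,3) finite_subset by blast
  then have "util_in pr q Y c \<le> (\<Sum>i\<in>{i \<in> Y. pr i > 0}. util_item pr q i c)"
    unfolding util_in_def using assms(2,3) by (intro sum_le_sum_filter util_item_nonpos) auto
  also have "\<dots> \<le> rpu D r pr q X c"
    unfolding rpu_def using assms by (intro sum_mono2 util_item_nonneg) auto
  finally show ?thesis .
qed

lemma util_in_descendant_le_pu_rpu:
  assumes "finite (D ! c)" and "\<And>i. i \<in> D ! c \<Longrightarrow> q c i > 0"
    and "X \<subseteq> W" and "W \<subseteq> D ! c" and "\<forall>w \<in> W - X. \<forall>x \<in> X. (x, w) \<in> r"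
  shows "util_in pr q W c \<le> pu pr q X c + rpu D r pr q X c"
proof -
  have "finite W" using assms(1,4) finite_subset by blast
  then have "util_in pr q W c = util_in pr q X c + util_in pr q (W - X) c"
    unfolding util_in_def by (simp add: sum.subset_diff[OF assms(3)])
  also have "util_in pr q X c \<le> pu pr q X c"
    using finite_subset[OF assms(3) \<open>finite W\<close>] assms(2-4) by (intro util_in_le_pu) auto
  also have "util_in pr q (W - X) c \<le> rpu D r pr q X c"
    using assms by (intro util_in_later_items_le_rpu) auto
  finally show ?thesis by simp
qed

theorem lemma3:
  fixes I :: "'a set" and D :: "'a set list"
    and q p :: "nat \<Rightarrow> 'a \<Rightarrow> real" and pr :: "'a \<Rightarrow> real"
    and r :: "('a \<times> 'a) set" and X W :: "'a set"
  assumes "uncertain_db I D q p"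
    and "strict_linear_order_on I r"
    and "X \<subseteq> I"
    and "descendant I r X W"
  shows "util D pr q W \<le> SUM_pu D pr q X + SUM_rpu D r pr q X"
proof -
  \<comment> \<open>Only the order condition inside \<open>descendant\<close> matters.\<close>
  define CW where "CW = {c. c < length D \<and> W \<subseteq> D ! c}"
  define CX where "CX = {c. c < length D \<and> X \<subseteq> D ! c}"
  have db: "finite (D ! c)" "\<And>i. i \<in> D ! c \<Longrightarrow> q c i > 0" if "c < length D" for c
    using assms(1) that finite_subset unfolding uncertain_db_def by blast+
  have desc: "X \<subset> W" "\<forall>w \<in> W - X. \<forall>x \<in> X. (x, w) \<in> r"
    using assms(4) unfolding descendant_def by auto
  have "util D pr q W = (\<Sum>c\<in>CW. util_in pr q W c)"
    unfolding util_def CW_def ..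
  also have "\<dots> \<le> (\<Sum>c\<in>CW. pu pr q X c + rpu D r pr q X c)"
    using db desc by (intro sum_mono util_in_descendant_le_pu_rpu) (auto simp: CW_def)
  also have "\<dots> \<le> (\<Sum>c\<in>CX. pu pr q X c + rpu D r pr q X c)"
    using db desc by (intro sum_mono2 add_nonneg_nonneg pu_nonneg rpu_nonneg)
      (auto simp: CW_def CX_def)
  also have "\<dots> = SUM_pu D pr q X + SUM_rpu D r pr q X"
    unfolding SUM_pu_def SUM_rpu_def CX_def by (simp add: sum.distrib)
  finally show ?thesis .
qed

end
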